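(* For every cardinal $\kappa$ there is a regular cardinal $\lambda>\kappa$ such that $\mathrm{Gal}(\mathcal{D}_\lambda,\lambda,2^\lambda)$ holds. In particular, it is impossible that $\mathrm{Gal}(\mathcal{D}_\theta,\theta,2^\theta)$ fails for every regular uncountable cardinal $\theta$.
   Context: For a regular uncountable cardinal $\theta$, $\mathcal{D}_\theta$ denotes the club filter on $\theta$. For a filter $\mathcal{F}$ and cardinals $\mu\leq\lambda$, $\mathrm{Gal}(\mathcal{F},\mu,\lambda)$ is the statement: for every $\mathcal{C}\subseteq\mathcal{F}$ with $|\mathcal{C}|=\lambda$ there is $\mathcal{E}\subseteq\mathcal{C}$ with $|\mathcal{E}|=\mu$ such that $\bigcap\mathcal{E}\in\mathcal{F}$. *)

theory Defs
  imports Main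
begin

text \<open>A cardinal lambda is represented by a set L together with a cardinal
  well-order r on L (card_order_on L r); the strict order of the ordinal lambda
  is (x,y) in r with x different from y.\<close>

definition strict_below :: "'b rel \<Rightarrow> 'b \<Rightarrow> 'b \<Rightarrow> bool" where
  "strict_below r x y \<longleftrightarrow> (x, y) \<in> r \<and> x \<noteq> y"

definition unbounded_in :: "'b set \<Rightarrow> 'b rel \<Rightarrow> 'b set \<Rightarrow> bool" where
  "unbounded_in L r C \<longleftrightarrow> (\<forall>a\<in>L. \<exists>c\<in>C. strict_below r a c)"

definition closed_in :: "'b set \<Rightarrow> 'b rel \<Rightarrow> 'b set \<Rightarrow> bool" where
  "closed_in L r C \<longleftrightarrow>
     (\<forall>a\<in>L. (\<exists>c\<in>C. strict_below r c a) \<and>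
             (\<forall>b. strict_below r b a \<longrightarrow> (\<exists>c\<in>C. strict_below r b c \<and> strict_below r c a))
             \<longrightarrow> a \<in> C)"

definition club :: "'b set \<Rightarrow> 'b rel \<Rightarrow> 'b set \<Rightarrow> bool" where
  "club L r C \<longleftrightarrow> C \<subseteq> L \<and> unbounded_in L r C \<and> closed_in L r C"

definition club_filter :: "'b set \<Rightarrow> 'b rel \<Rightarrow> 'b set set" where
  "club_filter L r = {X. X \<subseteq> L \<and> (\<exists>C. club L r C \<and> C \<subseteq> X)}"

definition Gal :: "'b set set \<Rightarrow> 'c rel \<Rightarrow> 'd rel \<Rightarrow> bool" where
  "Gal F mu la \<longleftrightarrow>
     (\<forall>CC. CC \<subseteq> F \<and> (card_of CC, la) \<in> ordIso \<longrightarrow> (\<exists>EE. EE \<subseteq> CC \<and> (card_of EE, mu) \<in> ordIso \<and> \<Inter>EE \<in> F))"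

end

theory Submission
  imports Defs
begin

(* Let \<kappa> be infinite and above the given cardinal, and let \<lambda> be the least cardinal with
   2^\<lambda> > 2^\<kappa>. Then 2^\<mu> \<le> 2^\<kappa> for every \<mu> < \<lambda>, hence \<kappa> < \<lambda>, and \<lambda> is regular: a
   subset of \<lambda> is determined by its traces below the points of a cofinal set K, so
   |K| < \<lambda> would give 2^\<lambda> \<le> 2^(|K| \<times> \<kappa>) \<le> 2^\<kappa>.
   For Gal(D_\<lambda>, \<lambda>, 2^\<lambda>), take 2^\<lambda> sets in the club filter. A member H is isolated if
   some trace H \<inter> [0, g] is shared by no other member; isolated members are coded by
   pairs (g, trace), of which there are only \<lambda> \<times> 2^\<kappa> < 2^\<lambda>. So some H is not isolated:
   for each g < \<lambda> pick X_g \<noteq> H agreeing with H on [0, g]. These X_g form \<lambda> distinct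
   sets (by regularity), and the diagonal intersection of clubs inside H and the X_g is a
   club inside every X_g: above g it lies in X_g, and up to g it lies in H. *)

unbundle cardinal_syntax

lemma strict_below_Field: "strict_below r x y \<Longrightarrow> x \<in> Field r"
  unfolding strict_below_def by (auto simp: Field_def)

context
  fixes r :: "'a rel"
  assumes r: "Card_order r"
begin

lemma Card_order_wo_rel: "wo_rel r"
  using r unfolding wo_rel_def card_order_on_def by simp

lemma strict_below_trans: "strict_below r x y \<Longrightarrow> strict_below r y z \<Longrightarrow> strict_below r x z"
  using wo_rel.TRANS[OF Card_order_wo_rel] wo_rel.ANTISYM[OF Card_order_wo_rel]
  unfolding strict_below_def trans_def antisym_def by blast

lemma strict_below_le_trans: "strict_below r x y \<Longrightarrow> (y, z) \<in> r \<Longrightarrow> strict_below r x z"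
  using wo_rel.TRANS[OF Card_order_wo_rel] wo_rel.ANTISYM[OF Card_order_wo_rel]
  unfolding strict_below_def trans_def antisym_def by blast

lemma le_strict_below_trans: "(x, y) \<in> r \<Longrightarrow> strict_below r y z \<Longrightarrow> strict_below r x z"
  using wo_rel.TRANS[OF Card_order_wo_rel] wo_rel.ANTISYM[OF Card_order_wo_rel]
  unfolding strict_below_def trans_def antisym_def by blast

lemma le_if_not_strict_below:
  "x \<in> Field r \<Longrightarrow> y \<in> Field r \<Longrightarrow> \<not> strict_below r x y \<Longrightarrow> (y, x) \<in> r"
  using wo_rel.in_notinI[OF Card_order_wo_rel] unfolding strict_below_def by blast

lemma infinite_Field_if_nat_ordLess: "|UNIV :: nat set| <o r \<Longrightarrow> \<not> finite (Field r)"
  using card_of_Field_ordIso[OF r] infinite_iff_card_of_nat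
    ordLess_imp_ordLeq ordLeq_ordIso_trans ordIso_symmetric by metis

lemma regularCard_strict_upper_bound:
  assumes inf: "\<not> finite (Field r)" and reg: "regularCard r"
    and S: "S \<subseteq> Field r" "|S| <o r"
  shows "\<exists>a\<in>Field r. \<forall>s\<in>S. strict_below r s a"
proof -
  have "\<not> cofinal S r"
    using reg S not_ordLess_ordIso unfolding regularCard_def by blast
  then obtain a where a: "a \<in> Field r" "\<forall>s\<in>S. a = s \<or> (a, s) \<notin> r"
    unfolding cofinal_def by blast
  have "(s, a) \<in> r" if "s \<in> S" for s
    using wo_rel.in_notinI[OF Card_order_wo_rel] a S that by blast
  moreover obtain b where "b \<in> Field r" "strict_below r a b"
    using infinite_Card_order_limit[OF r inf a(1)] unfolding strict_below_def by blast
  ultimately show ?thesis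
    using le_strict_below_trans by blast
qed

lemma under_ordLess:
  assumes inf: "\<not> finite (Field r)" and a: "a \<in> Field r"
  shows "|under r a| <o r"
proof -
  obtain b where b: "b \<in> Field r" "strict_below r a b"
    using infinite_Card_order_limit[OF r inf a] unfolding strict_below_def by blast
  have "under r a \<subseteq> underS r b"
    using b(2) le_strict_below_trans unfolding under_def underS_def strict_below_def by blast
  then show ?thesis
    using card_of_mono1 card_of_underS[OF r b(1)] ordLeq_ordLess_trans by blast
qed

end

section \<open>Clubs and diagonal intersections\<close>

definition limit_point :: "'a rel \<Rightarrow> 'a set \<Rightarrow> 'a \<Rightarrow> bool" where
  "limit_point r C a \<longleftrightarrow> (\<exists>c\<in>C. strict_below r c a) \<and>
     (\<forall>b. strict_below r b a \<longrightarrow> (\<exists>c\<in>C. strict_below r b c \<and> strict_below r c a))"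

lemma clubI:
  assumes "C \<subseteq> L" "\<And>a. a \<in> L \<Longrightarrow> \<exists>c\<in>C. strict_below r a c"
    "\<And>a. a \<in> L \<Longrightarrow> limit_point r C a \<Longrightarrow> a \<in> C"
  shows "club L r C"
  using assms unfolding club_def unbounded_in_def closed_in_def limit_point_def by blast

lemma club_subset: "club L r C \<Longrightarrow> C \<subseteq> L"
  unfolding club_def by blast

lemma club_unbounded: "club L r C \<Longrightarrow> a \<in> L \<Longrightarrow> \<exists>c\<in>C. strict_below r a c"
  unfolding club_def unbounded_in_def by blast

lemma club_closed: "club L r C \<Longrightarrow> a \<in> L \<Longrightarrow> limit_point r C a \<Longrightarrow> a \<in> C"
  unfolding club_def closed_in_def limit_point_def by blast

lemma limit_point_mono: "limit_point r C a \<Longrightarrow> C \<subseteq> C' \<Longrightarrow> limit_point r C' a"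
  unfolding limit_point_def by blast

lemma limit_point_above:
  assumes r: "Card_order r" and lim: "limit_point r C a" and i: "strict_below r i a"
  shows "limit_point r {c\<in>C. strict_below r i c} a"
  unfolding limit_point_def
proof (intro conjI allI impI)
  show "\<exists>c\<in>{c\<in>C. strict_below r i c}. strict_below r c a"
    using lim i unfolding limit_point_def by blast
  fix b assume b: "strict_below r b a"
  obtain m where m: "(b, m) \<in> r" "(i, m) \<in> r" "strict_below r m a"
    using wo_rel.in_notinI[OF Card_order_wo_rel[OF r]] strict_below_Field b i
    by (metis strict_below_def)
  then obtain c where "c \<in> C" "strict_below r m c" "strict_below r c a"
    using lim unfolding limit_point_def by blast
  then show "\<exists>c\<in>{c\<in>C. strict_below r i c}. strict_below r b c \<and> strict_below r c a"
    using m le_strict_below_trans[OF r] by blast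
qed

definition diag_Inter :: "'a rel \<Rightarrow> 'a set \<Rightarrow> ('a \<Rightarrow> 'a set) \<Rightarrow> 'a set" where
  "diag_Inter r G c = {d\<in>G. \<forall>i. strict_below r i d \<longrightarrow> d \<in> c i}"

lemma diag_Inter_closed:
  assumes r: "Card_order r" and G: "club (Field r) r G"
    and c: "\<And>i. i \<in> Field r \<Longrightarrow> club (Field r) r (c i)"
    and a: "a \<in> Field r" and lim: "limit_point r (diag_Inter r G c) a"
  shows "a \<in> diag_Inter r G c"
proof -
  have "a \<in> G"
    using club_closed[OF G a] limit_point_mono[OF lim] unfolding diag_Inter_def by blast
  moreover have "a \<in> c i" if i: "strict_below r i a" for i
  proof (rule club_closed[OF c[OF strict_below_Field[OF i]] a])
    show "limit_point r (c i) a"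
      using limit_point_above[OF r lim i] by (rule limit_point_mono) (auto simp: diag_Inter_def)
  qed
  ultimately show ?thesis
    unfolding diag_Inter_def by blast
qed

lemma exists_club_point_above_meeting_clubs:
  assumes r: "Card_order r" and inf: "\<not> finite (Field r)" and reg: "regularCard r"
    and G: "club (Field r) r G" and c: "\<And>i. i \<in> Field r \<Longrightarrow> club (Field r) r (c i)"
    and x: "x \<in> Field r"
  shows "\<exists>y\<in>G. strict_below r x y \<and> (\<forall>i\<in>under r x. \<exists>z\<in>c i. strict_below r x z \<and> (z, y) \<in> r)"
proof -
  have "\<exists>z\<in>c i. strict_below r x z" if "i \<in> under r x" for i
    using club_unbounded[OF c[of i] x] under_Field[of r x] that by blast
  then obtain w where w: "\<And>i. i \<in> under r x \<Longrightarrow> w i \<in> c i \<and> strict_below r x (w i)"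
    by metis
  have "w i \<in> Field r" if "i \<in> under r x" for i
    using w[OF that] club_subset[OF c[of i]] under_Field[of r x] that by blast
  then have "w ` under r x \<subseteq> Field r"
    by blast
  moreover have "|w ` under r x| <o r"
    using card_of_image under_ordLess[OF r inf x] ordLeq_ordLess_trans by blast
  ultimately obtain y where y: "y \<in> Field r" "\<forall>i\<in>under r x. strict_below r (w i) y"
    using regularCard_strict_upper_bound[OF r inf reg, of "w ` under r x"] by auto
  obtain g where g: "g \<in> G" "strict_below r y g"
    using club_unbounded[OF G y(1)] by blast
  have "x \<in> under r x"
    using x wo_rel.REFL[OF Card_order_wo_rel[OF r]] by (auto simp: under_def refl_on_def)
  then have "strict_below r x g"
    using w y(2) g(2) strict_below_trans[OF r] by blast
  moreover have "\<forall>i\<in>under r x. \<exists>z\<in>c i. strict_below r x z \<and> (z, g) \<in> r"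
    using w y(2) g(2) strict_below_trans[OF r] unfolding strict_below_def by blast
  ultimately show ?thesis
    using g(1) by blast
qed

lemma strict_chain_le:
  assumes r: "Card_order r" and s: "\<And>n. strict_below r (s n) (s (Suc n))" and "n \<le> k"
  shows "(s n, s k) \<in> r"
  using \<open>n \<le> k\<close>
proof (induction k rule: dec_induct)
  case base
  show ?case
    using strict_below_Field[OF s] wo_rel.REFL[OF Card_order_wo_rel[OF r]]
    by (auto simp: refl_on_def)
next
  case (step k)
  then show ?case
    using s[of k] strict_below_le_trans[OF r] le_strict_below_trans[OF r]
    unfolding strict_below_def by blast
qed

lemma exists_sup_of_strict_chain:
  assumes r: "Card_order r" and reg: "regularCard r" and nat: "|UNIV :: nat set| <o r"
    and s: "\<And>n. strict_below r (s n) (s (Suc n))"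
  obtains d where "d \<in> Field r" "\<And>n. strict_below r (s n) d"
    "\<And>b. strict_below r b d \<Longrightarrow> \<exists>n. strict_below r b (s n)"
proof -
  have wo: "wo_rel r"
    by (rule Card_order_wo_rel[OF r])
  have inf: "\<not> finite (Field r)"
    by (rule infinite_Field_if_nat_ordLess[OF r nat])
  define U where "U = {z\<in>Field r. \<forall>n. strict_below r (s n) z}"
  have "range s \<subseteq> Field r"
    using strict_below_Field[OF s] by blast
  moreover have "|range s| <o r"
    using card_of_image nat ordLeq_ordLess_trans by blast
  ultimately have "U \<noteq> {}"
    using regularCard_strict_upper_bound[OF r inf reg, of "range s"] unfolding U_def by blast
  moreover have "U \<subseteq> Field r"
    unfolding U_def by blast
  ultimately have d: "wo_rel.minim r U \<in> U" "\<And>u. u \<in> U \<Longrightarrow> (wo_rel.minim r U, u) \<in> r"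
    using wo_rel.minim_in[OF wo] wo_rel.minim_least[OF wo] by blast+
  show thesis
  proof (rule that)
    show "wo_rel.minim r U \<in> Field r" "\<And>n. strict_below r (s n) (wo_rel.minim r U)"
      using d(1) unfolding U_def by blast+
    fix b assume b: "strict_below r b (wo_rel.minim r U)"
    show "\<exists>n. strict_below r b (s n)"
    proof (rule ccontr)
      assume "\<not> ?thesis"
      then have "(s (Suc n), b) \<in> r" for n
        using le_if_not_strict_below[OF r] strict_below_Field[OF b] strict_below_Field[OF s]
        by blast
      then have "b \<in> U"
        using s strict_below_le_trans[OF r] strict_below_Field[OF b] unfolding U_def by blast
      then show False
        using d(2) b wo_rel.ANTISYM[OF wo] unfolding strict_below_def antisym_def by blast
    qed
  qed
qed

lemma club_mem_sup_of_interleaved_chain: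
  assumes r: "Card_order r" and C: "club (Field r) r C"
    and s: "\<And>n. strict_below r (s n) (s (Suc n))"
    and d: "d \<in> Field r" "\<And>n. strict_below r (s n) d"
      "\<And>b. strict_below r b d \<Longrightarrow> \<exists>n. strict_below r b (s n)"
    and meet: "\<And>n. m \<le> n \<Longrightarrow> \<exists>e\<in>C. strict_below r (s n) e \<and> (e, s (Suc n)) \<in> r"
  shows "d \<in> C"
proof (rule club_closed[OF C d(1)])
  have between: "\<exists>e\<in>C. strict_below r (s n) e \<and> strict_below r e d" if "m \<le> n" for n
    using meet[OF that] le_strict_below_trans[OF r _ d(2)] by blast
  show "limit_point r C d"
    unfolding limit_point_def
  proof (intro conjI allI impI)
    show "\<exists>e\<in>C. strict_below r e d"
      using between by blast
    fix b assume "strict_below r b d"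
    then obtain n where "strict_below r b (s n)"
      using d(3) by blast
    then have "strict_below r b (s (max n m))"
      using strict_below_le_trans[OF r] strict_chain_le[where s = s, OF r s] by simp
    then show "\<exists>e\<in>C. strict_below r b e \<and> strict_below r e d"
      using between[of "max n m"] strict_below_trans[OF r] by auto
  qed
qed

lemma diag_Inter_unbounded:
  assumes r: "Card_order r" and reg: "regularCard r" and nat: "|UNIV :: nat set| <o r"
    and G: "club (Field r) r G" and c: "\<And>i. i \<in> Field r \<Longrightarrow> club (Field r) r (c i)"
    and a: "a \<in> Field r"
  shows "\<exists>d\<in>diag_Inter r G c. strict_below r a d"
proof -
  (* d is the supremum of an \<omega>-chain in G whose gaps meet every c i with i below the gap,
     so closedness puts d into G and into each c i. *)
  define step where "step x y \<longleftrightarrow> y \<in> G \<and> strict_below r x y \<and>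
      (\<forall>i\<in>under r x. \<exists>z\<in>c i. strict_below r x z \<and> (z, y) \<in> r)" for x y
  have "\<exists>y. step x y" if "x \<in> Field r" for x
    using exists_club_point_above_meeting_clubs[where c = c,
        OF r infinite_Field_if_nat_ordLess[OF r nat] reg G c that]
    unfolding step_def by blast
  then obtain next_point where next_point: "\<And>x. x \<in> Field r \<Longrightarrow> step x (next_point x)"
    by metis
  define s where "s n = (next_point ^^ n) a" for n
  have s_Field: "s n \<in> Field r" for n
    using a next_point club_subset[OF G] by (induction n) (auto simp: s_def step_def)
  have s_step: "step (s n) (s (Suc n))" for n
    using next_point[OF s_Field[of n]] by (simp add: s_def)
  then have s_strict: "strict_below r (s n) (s (Suc n))" for n
    unfolding step_def by blast
  obtain d where d: "d \<in> Field r" "\<And>n. strict_below r (s n) d"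
      "\<And>b. strict_below r b d \<Longrightarrow> \<exists>n. strict_below r b (s n)"
    using exists_sup_of_strict_chain[where s = s, OF r reg nat s_strict] by blast
  have "(s (Suc n), s (Suc n)) \<in> r" for n
    using strict_chain_le[where s = s, OF r s_strict] by blast
  then have "d \<in> G"
    using club_mem_sup_of_interleaved_chain[where s = s and m = 0, OF r G s_strict d] s_step
    unfolding step_def by blast
  moreover have "d \<in> c i" if i: "strict_below r i d" for i
  proof -
    obtain m where m: "strict_below r i (s m)"
      using d(3)[OF i] by blast
    have "i \<in> under r (s n)" if "m \<le> n" for n
      using m strict_chain_le[where s = s, OF r s_strict that] strict_below_le_trans[OF r]
      unfolding strict_below_def under_def by blast
    then show ?thesis
      using club_mem_sup_of_interleaved_chain[where s = s and m = m,
          OF r c[OF strict_below_Field[OF i]] s_strict d]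
        s_step unfolding step_def by blast
  qed
  ultimately show ?thesis
    using d(2)[of 0] unfolding diag_Inter_def s_def by auto
qed

lemma club_diag_Inter:
  assumes r: "Card_order r" and reg: "regularCard r" and nat: "|UNIV :: nat set| <o r"
    and G: "club (Field r) r G" and c: "\<And>i. i \<in> Field r \<Longrightarrow> club (Field r) r (c i)"
  shows "club (Field r) r (diag_Inter r G c)"
proof (rule clubI)
  show "diag_Inter r G c \<subseteq> Field r"
    using club_subset[OF G] unfolding diag_Inter_def by blast
  show "\<exists>d\<in>diag_Inter r G c. strict_below r a d" if "a \<in> Field r" for a
    by (rule diag_Inter_unbounded[OF r reg nat G c that])
  show "a \<in> diag_Inter r G c" if "a \<in> Field r" "limit_point r (diag_Inter r G c) a" for a
    by (rule diag_Inter_closed[OF r G c that])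
qed

section \<open>The least cardinal at which the power set jumps\<close>

lemma card_of_Pow_mono: "|A| \<le>o |B| \<Longrightarrow> |Pow A| \<le>o |Pow B|"
proof -
  assume "|A| \<le>o |B|"
  then obtain f where f: "inj_on f A" "f ` A \<subseteq> B"
    using card_of_ordLeq by metis
  have "inj_on (image f) (Pow A)" "image f ` Pow A \<subseteq> Pow B"
    using f inj_on_image_Pow by blast+
  then show ?thesis
    using card_of_ordLeq by metis
qed

lemma ordLess_if_Pow_ordLess: "|Pow A| <o |Pow B| \<Longrightarrow> |A| <o |B|"
  using card_of_Pow_mono not_ordLess_ordLeq ordLess_or_ordLeq[OF card_of_Well_order card_of_Well_order]
  by blast

lemma card_of_Times_ordLess:
  assumes A: "|A| <o r" and B: "|B| <o r" and infB: "\<not> finite B"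
  shows "|A \<times> B| <o r"
proof (cases "|A| \<le>o |B|")
  case True
  have "|A \<times> B| \<le>o |B \<times> B|"
    using True card_of_Times_mono1 by blast
  also have "|B \<times> B| =o |B|"
    using card_of_Times_same_infinite[OF infB] .
  finally show ?thesis
    using B ordLeq_ordLess_trans by blast
next
  case False
  then have BA: "|B| \<le>o |A|"
    using ordLess_or_ordLeq[OF card_of_Well_order card_of_Well_order] ordLess_imp_ordLeq by blast
  then have "\<not> finite A"
    using infB card_of_ordLeq_finite by blast
  have "|A \<times> B| \<le>o |A \<times> A|"
    using BA card_of_Times_mono2 by blast
  also have "|A \<times> A| =o |A|"
    using card_of_Times_same_infinite[OF \<open>\<not> finite A\<close>] .
  finally show ?thesis
    using A ordLeq_ordLess_trans by blast
qed

lemma Pow_ordLeq_if_ordLess: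
  fixes r :: "'a rel" and X :: "'c set"
  assumes small: "\<And>A :: 'a set. |A| <o r \<Longrightarrow> |Pow A| \<le>o M" and X: "|X| <o r"
  shows "|Pow X| \<le>o M"
proof -
  obtain A :: "'a set" where "|X| =o |A|" "|A| <o r"
    using internalize_card_of_ordLess[THEN iffD1, OF X] by blast
  then show ?thesis
    using small card_of_Pow_mono[OF ordIso_imp_ordLeq] ordLeq_transitive by blast
qed

lemma Pow_Field_ordLeq_Pow_Times_cofinal:
  fixes r :: "'a rel" and B :: "'b set"
  assumes K: "K \<subseteq> Field r" "cofinal K r"
    and traces: "\<And>k. k \<in> K \<Longrightarrow> |Pow (underS r k)| \<le>o |Pow B|"
  shows "|Pow (Field r)| \<le>o |Pow (K \<times> B)|"
proof -
  have "\<forall>k\<in>K. \<exists>e. inj_on e (Pow (underS r k)) \<and> e ` Pow (underS r k) \<subseteq> Pow B"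
    using traces card_of_ordLeq by blast
  then obtain E where E: "\<And>k. k \<in> K \<Longrightarrow> inj_on (E k) (Pow (underS r k)) \<and> E k ` Pow (underS r k) \<subseteq> Pow B"
    by metis
  define code where "code X = {(k, b). k \<in> K \<and> b \<in> E k (X \<inter> underS r k)}" for X
  (* A subset of Field r is determined by its traces below the points of K. *)
  have "inj_on code (Pow (Field r))"
  proof (rule inj_onI)
    fix X Y assume X: "X \<in> Pow (Field r)" and Y: "Y \<in> Pow (Field r)" and eq: "code X = code Y"
    have traces_eq: "X \<inter> underS r k = Y \<inter> underS r k" if k: "k \<in> K" for k
    proof -
      have "E k (X \<inter> underS r k) = E k (Y \<inter> underS r k)"
        using eq k unfolding code_def by (auto simp: set_eq_iff)
      then show ?thesis
        using E[OF k] unfolding inj_on_def by blast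
    qed
    have "\<exists>k\<in>K. a \<in> underS r k" if "a \<in> Field r" for a
      using K(2) that unfolding cofinal_def underS_def by blast
    then show "X = Y"
      using X Y traces_eq by blast
  qed
  moreover have "code ` Pow (Field r) \<subseteq> Pow (K \<times> B)"
    using E unfolding code_def by blast
  ultimately show ?thesis
    using card_of_ordLeq by metis
qed

lemma regularCard_if_Pow_jump:
  fixes r :: "'a rel" and B :: "'b set"
  assumes r: "Card_order r" and B: "|B| <o r" "\<not> finite B"
    and small: "\<And>X :: 'a set. |X| <o r \<Longrightarrow> |Pow X| \<le>o |Pow B|"
    and jump: "|Pow B| <o |Pow (Field r)|"
  shows "regularCard r"
  unfolding regularCard_def
proof (intro allI impI)
  fix K assume K: "K \<subseteq> Field r \<and> cofinal K r"
  have "\<not> |K| <o r"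
  proof
    assume "|K| <o r"
    have "|Pow (Field r)| \<le>o |Pow (K \<times> B)|"
      using Pow_Field_ordLeq_Pow_Times_cofinal K small card_of_underS[OF r] by blast
    also have "|Pow (K \<times> B)| \<le>o |Pow B|"
      using Pow_ordLeq_if_ordLess[OF small card_of_Times_ordLess[OF \<open>|K| <o r\<close> B]] .
    finally show False
      using jump not_ordLess_ordLeq by blast
  qed
  moreover have "|K| \<le>o r"
    using K card_of_mono1 card_of_Field_ordIso[OF r] ordLeq_ordIso_trans by blast
  ultimately show "|K| =o r"
    using ordLeq_iff_ordLess_or_ordIso by blast
qed

lemma exists_least_Pow_jump:
  fixes B :: "'b set"
  obtains L :: "'b set set"
  where "|Pow B| <o |Pow L|" "\<And>A :: 'b set set. |A| <o |L| \<Longrightarrow> |Pow A| \<le>o |Pow B|"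
proof -
  define R where "R = {|A| | A :: 'b set set. |Pow B| <o |Pow A|}"
  have "|Pow B| \<in> R"
    unfolding R_def using card_of_Pow by blast
  moreover have "\<forall>r\<in>R. Card_order r"
    unfolding R_def using card_of_Card_order by blast
  ultimately obtain L :: "'b set set" where L: "|Pow B| <o |Pow L|" "\<forall>r\<in>R. |L| \<le>o r"
    using exists_minim_Card_order[of R] unfolding R_def by blast
  show thesis
  proof (rule that[OF L(1)])
    fix A :: "'b set set" assume "|A| <o |L|"
    then have "|A| \<notin> R"
      using L(2) not_ordLess_ordLeq by blast
    then show "|Pow A| \<le>o |Pow B|"
      unfolding R_def using ordLess_or_ordLeq[OF card_of_Well_order card_of_Well_order] by blast
  qed
qed

section \<open>Galvin's property for the club filter\<close>

lemma exists_nonisolated_member: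
  fixes r :: "'a rel" and B :: "'b set"
  assumes B: "\<not> finite B" and Field: "|Field r| \<le>o |Pow B|"
    and traces: "\<And>g. g \<in> Field r \<Longrightarrow> |Pow (under r g)| \<le>o |Pow B|"
    and CC: "|Pow B| <o |CC|"
  shows "\<exists>H\<in>CC. \<forall>g\<in>Field r. \<exists>X\<in>CC. X \<noteq> H \<and> X \<inter> under r g = H \<inter> under r g"
proof (rule ccontr)
  assume "\<not> ?thesis"
  then obtain g where g: "\<And>H. H \<in> CC \<Longrightarrow> g H \<in> Field r \<and>
      (\<forall>X\<in>CC. X \<inter> under r (g H) = H \<inter> under r (g H) \<longrightarrow> X = H)"
    by metis
  have "\<forall>k\<in>Field r. \<exists>e. inj_on e (Pow (under r k)) \<and> e ` Pow (under r k) \<subseteq> Pow B"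
    using traces card_of_ordLeq by blast
  then obtain E where E: "\<And>k. k \<in> Field r \<Longrightarrow> inj_on (E k) (Pow (under r k)) \<and> E k ` Pow (under r k) \<subseteq> Pow B"
    by metis
  (* Otherwise a member is determined by its isolating point g H and its trace there. *)
  define code where "code H = (g H, E (g H) (H \<inter> under r (g H)))" for H
  have "inj_on code CC"
  proof (rule inj_onI)
    fix H H' assume H: "H \<in> CC" and H': "H' \<in> CC" and eq: "code H = code H'"
    then have same_point: "g H = g H'"
      and "E (g H) (H \<inter> under r (g H)) = E (g H) (H' \<inter> under r (g H))"
      unfolding code_def by auto
    moreover have "inj_on (E (g H)) (Pow (under r (g H)))"
      using E g[OF H] by blast
    ultimately have "H \<inter> under r (g H) = H' \<inter> under r (g H)"
      by (auto dest: inj_onD)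
    then show "H = H'"
      using g[OF H'] H same_point by auto
  qed
  moreover have "code H \<in> Field r \<times> Pow B" if "H \<in> CC" for H
  proof -
    have "g H \<in> Field r"
      using g[OF that] by blast
    then show ?thesis
      using E unfolding code_def by blast
  qed
  ultimately have "|CC| \<le>o |Field r \<times> Pow B|"
    using card_of_ordLeq[of CC "Field r \<times> Pow B"] by blast
  also have "|Field r \<times> Pow B| \<le>o |Pow B \<times> Pow B|"
    using Field card_of_Times_mono1 by blast
  also have "|Pow B \<times> Pow B| =o |Pow B|"
    using card_of_Times_same_infinite B by auto
  finally show False
    using CC not_ordLess_ordLeq by blast
qed

lemma card_of_family_agreeing_below:
  assumes r: "Card_order r" and inf: "\<not> finite (Field r)" and reg: "regularCard r"
    and H: "H \<subseteq> Field r"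
    and X: "\<And>g. g \<in> Field r \<Longrightarrow> X g \<subseteq> Field r \<and> X g \<noteq> H \<and> X g \<inter> under r g = H \<inter> under r g"
  shows "|X ` Field r| =o r"
proof -
  have "\<not> |X ` Field r| <o r"
  proof
    assume small: "|X ` Field r| <o r"
    have "\<forall>Y\<in>X ` Field r. \<exists>d\<in>Field r. (d \<in> Y) \<noteq> (d \<in> H)"
      using X H by blast
    then obtain d where d: "\<And>Y. Y \<in> X ` Field r \<Longrightarrow> d Y \<in> Field r \<and> (d Y \<in> Y) \<noteq> (d Y \<in> H)"
      by metis
    have "|d ` X ` Field r| <o r"
      using card_of_image small ordLeq_ordLess_trans by blast
    then obtain z where z: "z \<in> Field r" "\<forall>Y\<in>X ` Field r. strict_below r (d Y) z"
      using regularCard_strict_upper_bound[OF r inf reg, of "d ` X ` Field r"] d by auto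
    then have "d (X z) \<in> under r z"
      unfolding under_def strict_below_def by blast
    then show False
      using d[of "X z"] X[OF z(1)] z(1) by blast
  qed
  moreover have "|X ` Field r| \<le>o r"
    using card_of_image card_of_Field_ordIso[OF r] ordLeq_ordIso_trans by blast
  ultimately show ?thesis
    using ordLeq_iff_ordLess_or_ordIso by blast
qed

lemma diag_Inter_subset_if_agrees_below:
  assumes r: "Card_order r" and g: "g \<in> Field r"
    and G: "G \<subseteq> Field r" "G \<subseteq> H" and c: "c g \<subseteq> Y"
    and agree: "Y \<inter> under r g = H \<inter> under r g"
  shows "diag_Inter r G c \<subseteq> Y"
proof
  fix d assume d: "d \<in> diag_Inter r G c"
  show "d \<in> Y"
  proof (cases "strict_below r g d")
    case True
    then show ?thesis
      using d c unfolding diag_Inter_def by blast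
  next
    case False
    then have "d \<in> H \<inter> under r g"
      using d G le_if_not_strict_below[OF r g, of d] unfolding diag_Inter_def under_def by blast
    then show ?thesis
      using agree by blast
  qed
qed

lemma Inter_in_club_filter:
  assumes "club L r D" "\<And>Y. Y \<in> EE \<Longrightarrow> D \<subseteq> Y \<and> Y \<subseteq> L" "EE \<noteq> {}"
  shows "\<Inter>EE \<in> club_filter L r"
  using assms unfolding club_filter_def by blast

lemma Gal_club_filter:
  fixes L :: "'a set" and B :: "'b set"
  assumes reg: "regularCard |L|" and nat: "|UNIV :: nat set| <o |L|" and B: "\<not> finite B"
    and small: "\<And>X :: 'a set. |X| <o |L| \<Longrightarrow> |Pow X| \<le>o |Pow B|"
    and L: "|L| \<le>o |Pow B|" and jump: "|Pow B| <o |Pow L|"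
  shows "Gal (club_filter L (card_of L)) (card_of L) (card_of (Pow L))"
  unfolding Gal_def
proof (intro allI impI, elim conjE)
  let ?r = "|L|"
  have r: "Card_order ?r" and Field: "Field ?r = L"
    by (rule card_of_Card_order, rule Field_card_of)
  have inf: "\<not> finite L"
    using infinite_Field_if_nat_ordLess[OF r nat] Field by simp
  fix CC assume CC: "CC \<subseteq> club_filter L ?r" "|CC| =o |Pow L|"
  have "\<exists>H\<in>CC. \<forall>g\<in>L. \<exists>X\<in>CC. X \<noteq> H \<and> X \<inter> under ?r g = H \<inter> under ?r g"
    using exists_nonisolated_member[OF B, of ?r CC] L jump CC(2)
      small[OF under_ordLess[OF r]] inf
    by (simp add: Field ordLess_ordIso_trans ordIso_symmetric)
  then obtain H where H: "H \<in> CC"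
    and "\<forall>g\<in>L. \<exists>X\<in>CC. X \<noteq> H \<and> X \<inter> under ?r g = H \<inter> under ?r g"
    by blast
  then obtain X where
    X: "\<And>g. g \<in> L \<Longrightarrow> X g \<in> CC \<and> X g \<noteq> H \<and> X g \<inter> under ?r g = H \<inter> under ?r g"
    by metis
  have "\<forall>Y\<in>CC. \<exists>C. club L ?r C \<and> C \<subseteq> Y"
    using CC(1) unfolding club_filter_def by blast
  then obtain cl where cl: "\<And>Y. Y \<in> CC \<Longrightarrow> club L ?r (cl Y) \<and> cl Y \<subseteq> Y"
    by metis
  have CC_sub: "Y \<subseteq> L" if "Y \<in> CC" for Y
    using that CC(1) unfolding club_filter_def by blast
  define D where "D = diag_Inter ?r (cl H) (cl \<circ> X)"
  have "club L ?r D"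
    using club_diag_Inter[OF r reg nat] cl H X unfolding D_def Field by simp
  moreover have "D \<subseteq> X g" if g: "g \<in> L" for g
    unfolding D_def
    using diag_Inter_subset_if_agrees_below[OF r, of g "cl H" H "cl \<circ> X"] g cl[OF H] X[OF g]
      cl[of "X g"] club_subset[of L ?r "cl H"]
    by (simp add: Field)
  moreover have "X ` L \<noteq> {}"
    using inf by auto
  ultimately have "\<Inter>(X ` L) \<in> club_filter L ?r"
    using Inter_in_club_filter[of L ?r D "X ` L"] X CC_sub by blast
  moreover have "|X ` L| =o ?r"
  proof -
    have "X g \<subseteq> L \<and> X g \<noteq> H \<and> X g \<inter> under ?r g = H \<inter> under ?r g" if "g \<in> L" for g
      using X[OF that] CC_sub by blast
    then show ?thesis
      using card_of_family_agreeing_below[OF r _ reg, of H X] inf CC_sub[OF H] unfolding Field by blast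
  qed
  moreover have "X ` L \<subseteq> CC"
    using X by blast
  ultimately show "\<exists>EE\<subseteq>CC. |EE| =o ?r \<and> \<Inter>EE \<in> club_filter L ?r"
    by blast
qed

lemma infinite_UNIV_if_Pow_chain:
  fixes f :: "nat \<Rightarrow> 'b set"
  assumes chain: "\<And>n. |Pow (f n)| \<le>o |f (Suc n)|"
  shows "infinite (UNIV :: 'b set)"
proof
  assume fin: "finite (UNIV :: 'b set)"
  then have finite_sets: "finite A" for A :: "'b set"
    by (rule finite_subset[OF subset_UNIV])
  have "n \<le> card (f n)" for n
  proof (induction n)
    case 0
    show ?case by simp
  next
    case (Suc n)
    have "Suc n \<le> 2 ^ n"
      by (induction n) auto
    also have "\<dots> \<le> 2 ^ card (f n)"
      using Suc by simp
    also have "\<dots> = card (Pow (f n))"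
      using card_Pow[OF finite_sets] by simp
    also have "\<dots> \<le> card (f (Suc n))"
      using chain[of n] card_inj_on_le[OF _ _ finite_sets] card_of_ordLeq by metis
    finally show ?case .
  qed
  then show False
    using card_mono[OF fin subset_UNIV] by (metis Suc_n_not_le_n le_trans)
qed

theorem proposition3p7:
  fixes K :: "'a set"
  assumes big: "\<exists>f :: nat \<Rightarrow> 'b set. (card_of K, card_of (f 0)) \<in> ordLeq \<and> (\<forall>n. (card_of (Pow (f n)), card_of (f (Suc n))) \<in> ordLeq)"
  shows "\<exists>(L :: 'b set set) r.
           card_order_on L r \<and> regularCard r \<and> (card_of (UNIV :: nat set), r) \<in> ordLess \<and> (card_of K, r) \<in> ordLess \<and>
           Gal (club_filter L r) r (card_of (Pow L))"
proof -
  obtain f :: "nat \<Rightarrow> 'b set" where f0: "|K| \<le>o |f 0|" and chain: "\<And>n. |Pow (f n)| \<le>o |f (Suc n)|"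
    using big by blast
  (* With \<kappa> = |UNIV :: 'b set| every L :: 'b set set has |L| \<le> 2^\<kappa>. *)
  let ?B = "UNIV :: 'b set"
  have B: "\<not> finite ?B"
    using infinite_UNIV_if_Pow_chain[where f = f, OF chain] .
  obtain L :: "'b set set"
    where jump: "|Pow ?B| <o |Pow L|" and least: "\<And>A :: 'b set set. |A| <o |L| \<Longrightarrow> |Pow A| \<le>o |Pow ?B|"
    using exists_least_Pow_jump[of ?B] by blast
  have BL: "|?B| <o |L|"
    using ordLess_if_Pow_ordLess[OF jump] .
  have nat: "|UNIV :: nat set| <o |L|"
    using B BL infinite_iff_card_of_nat ordLeq_ordLess_trans by blast
  have K: "|K| <o |L|"
    using f0 card_of_mono1[of "f 0" ?B] BL ordLeq_transitive ordLeq_ordLess_trans by blast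
  have reg: "regularCard |L|"
    using regularCard_if_Pow_jump[OF card_of_Card_order BL B least] jump by (simp add: Field_card_of)
  have "Gal (club_filter L (card_of L)) (card_of L) (card_of (Pow L))"
    using Gal_club_filter[OF reg nat B least _ jump] card_of_mono1[of L "Pow ?B"] by simp
  then show ?thesis
    using card_of_card_order_on[of L] reg nat K by blast
qed

end
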